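(* For any constant $\beta\ge 0$, there exists an indivisible-goods instance in which no allocation selected by the maximum Nash welfare (MNW) rule satisfies EJR-$\beta$.
   Context: Model: There is a set of agents $N=\{1,\dots,n\}$. The resource $R$ consists of a cake $C=[0,c]$ for a real $c\ge 0$ and a set of indivisible goods $G=\{g_1,\dots,g_m\}$ for an integer $m\ge 0$, with $\max(c,m)>0$. A bundle $R'=(C',G')$ consists of a piece of cake $C'\subseteq C$ (finite union of disjoint closed intervals, with total length $\ell(C')$) and a set $G'\subseteq G$; its size is $s(R')=\ell(C')+|G'|$. Each agent $i$ approves a bundle $R_i=(C_i,G_i)$, and her utility for a bundle $R'$ is $u_i(R')=\ell(C_i\cap C')+|G_i\cap G'|$. A parameter $\alpha\in(0,c+m]$ is given; an allocation is a bundle $A$ with $s(A)\le\alpha$. An indivisible-goods instance is one with $c=0$. For a real $t>0$, a group $N^*\subseteq N$ is $t$-cohesive if $|N^*|\ge t\cdot n/\alpha$ and $s(\bigcap_{i\in N^*}R_i)\ge t$. EJR-$\beta$ (for $\beta\ge 0$): an allocation $A$ satisfies EJR-$\beta$ if for every real $t>0$ and every $t$-cohesive group $N^*$, there is $j\in N^*$ with $u_j(A)>t-\beta$. MNW rule: selects an allocation $A$ maximizing $\prod_{i\in N}u_i(A)$; if the maximum product is $0$, it first maximizes the number of agents with positive utility and then maximizes the product of utilities of that set of agents. *)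

theory Defs
  imports Main "HOL.Real"
begin

text \<open>Indivisible-goods instances (cake C = [0,0], contributing nothing).\<close>

definition valid_instance :: "nat set \<Rightarrow> nat set \<Rightarrow> (nat \<Rightarrow> nat set) \<Rightarrow> real \<Rightarrow> bool" where
  "valid_instance N G R \<alpha> \<longleftrightarrow> finite N \<and> N \<noteq> {} \<and> finite G \<and> G \<noteq> {} \<and>
     (\<forall>i\<in>N. R i \<subseteq> G) \<and> 0 < \<alpha> \<and> \<alpha> \<le> real (card G)"

definition is_alloc :: "nat set \<Rightarrow> real \<Rightarrow> nat set \<Rightarrow> bool" where
  "is_alloc G \<alpha> A \<longleftrightarrow> A \<subseteq> G \<and> real (card A) \<le> \<alpha>"

definition util :: "(nat \<Rightarrow> nat set) \<Rightarrow> nat \<Rightarrow> nat set \<Rightarrow> nat" where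
  "util R i A = card (R i \<inter> A)"

definition cohesive :: "nat set \<Rightarrow> (nat \<Rightarrow> nat set) \<Rightarrow> real \<Rightarrow> real \<Rightarrow> nat set \<Rightarrow> bool" where
  "cohesive N R \<alpha> t S \<longleftrightarrow> S \<subseteq> N \<and> real (card S) \<ge> t * real (card N) / \<alpha> \<and>
     real (card (\<Inter>i\<in>S. R i)) \<ge> t"

definition EJR :: "nat set \<Rightarrow> (nat \<Rightarrow> nat set) \<Rightarrow> real \<Rightarrow> real \<Rightarrow> nat set \<Rightarrow> bool" where
  "EJR N R \<alpha> \<beta> A \<longleftrightarrow> (\<forall>t::real. t > 0 \<longrightarrow> (\<forall>S. cohesive N R \<alpha> t S \<longrightarrow>
     (\<exists>j\<in>S. real (util R j A) > t - \<beta>)))"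

definition pos_agents :: "nat set \<Rightarrow> (nat \<Rightarrow> nat set) \<Rightarrow> nat set \<Rightarrow> nat set" where
  "pos_agents N R A = {i\<in>N. util R i A > 0}"

definition MNW :: "nat set \<Rightarrow> nat set \<Rightarrow> (nat \<Rightarrow> nat set) \<Rightarrow> real \<Rightarrow> nat set \<Rightarrow> bool" where
  "MNW N G R \<alpha> A \<longleftrightarrow> is_alloc G \<alpha> A \<and>
    (if (\<exists>B. is_alloc G \<alpha> B \<and> (\<Prod>i\<in>N. util R i B) > 0)
     then (\<forall>B. is_alloc G \<alpha> B \<longrightarrow> (\<Prod>i\<in>N. util R i B) \<le> (\<Prod>i\<in>N. util R i A))
     else (\<forall>B. is_alloc G \<alpha> B \<longrightarrow> card (pos_agents N R B) \<le> card (pos_agents N R A)) \<and>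
          (\<forall>B. is_alloc G \<alpha> B \<and> card (pos_agents N R B) = card (pos_agents N R A) \<longrightarrow>
               (\<Prod>i\<in>pos_agents N R B. util R i B) \<le> (\<Prod>i\<in>pos_agents N R A. util R i A)))"

end

theory Submission
  imports Defs
begin

text \<open>For an integer \<open>t > \<beta>\<close>, take \<open>4t\<close> agents, \<open>3t\<close> goods and \<open>\<alpha> = 2t\<close>. The first \<open>2t\<close>
  agents all approve the \<open>t\<close> common goods \<open>0, \<dots>, t-1\<close>; each of the other \<open>2t\<close> agents approves
  one private good of its own. The first \<open>2t\<close> agents form a \<open>t\<close>-cohesive group. No allocation of
  \<open>2t\<close> goods makes everybody happy, so MNW maximises the number of agents with positive utility,
  and therefore picks at most one common good: a second common good could be exchanged for a
  missing private good, gaining one agent. Hence every member of the cohesive group gets utility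
  at most \<open>1 \<le> t - \<beta>\<close>.\<close>

lemma prod_util_pos_iff:
  "finite N \<Longrightarrow> 0 < (\<Prod>i\<in>N. util R i A) \<longleftrightarrow> (\<forall>i\<in>N. 0 < util R i A)"
  by (simp add: prod_zero_iff flip: not_gr_zero)

lemma MNW_maximizes_card_pos_agents:
  assumes "MNW N G R \<alpha> A"
    and "\<And>B. is_alloc G \<alpha> B \<Longrightarrow> \<not> 0 < (\<Prod>i\<in>N. util R i B)"
    and "is_alloc G \<alpha> B"
  shows "card (pos_agents N R B) \<le> card (pos_agents N R A)"
  using assms unfolding MNW_def by (auto split: if_splits)

definition approval :: "nat \<Rightarrow> nat \<Rightarrow> nat set" where
  "approval t i = (if i < 2*t then {0..<t} else {i - t})"

lemma valid_instance_approval: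
  "1 \<le> t \<Longrightarrow> valid_instance {0..<4*t} {0..<3*t} (approval t) (2*t)"
  unfolding valid_instance_def approval_def by auto

lemma util_approval_common: "i < 2*t \<Longrightarrow> util (approval t) i A = card ({0..<t} \<inter> A)"
  by (simp add: util_def approval_def)

lemma util_approval_private_pos_iff:
  "2*t \<le> i \<Longrightarrow> 0 < util (approval t) i A \<longleftrightarrow> i - t \<in> A"
  by (simp add: util_def approval_def Int_insert_left)

lemma pos_agents_approval:
  "pos_agents {0..<4*t} (approval t) A =
     (if {0..<t} \<inter> A = {} then {} else {0..<2*t}) \<union> (\<lambda>g. g + t) ` ({t..<3*t} \<inter> A)"
  (is "?lhs = ?common \<union> ?private")
proof (intro equalityI subsetI)
  fix i assume "i \<in> ?lhs"
  show "i \<in> ?common \<union> ?private"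
  proof (cases "i < 2*t")
    case True
    with \<open>i \<in> ?lhs\<close> have "{0..<t} \<inter> A \<noteq> {}"
      by (auto simp: pos_agents_def util_approval_common)
    with True show ?thesis by simp
  next
    case False
    with \<open>i \<in> ?lhs\<close> show ?thesis
      by (auto simp: pos_agents_def util_approval_private_pos_iff intro!: image_eqI[of _ _ "i - t"])
  qed
next
  fix i assume "i \<in> ?common \<union> ?private"
  then consider "{0..<t} \<inter> A \<noteq> {}" "i < 2*t" | g where "g \<in> {t..<3*t} \<inter> A" "i = g + t"
    by (fastforce split: if_splits)
  then show "i \<in> ?lhs"
  proof cases
    case 1
    then show ?thesis
      by (simp add: pos_agents_def util_approval_common card_gt_0_iff)
  next
    case 2
    then show ?thesis
      by (auto simp: pos_agents_def util_approval_private_pos_iff)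
  qed
qed

lemma card_pos_agents_approval:
  "card (pos_agents {0..<4*t} (approval t) A) =
     (if {0..<t} \<inter> A = {} then 0 else 2*t) + card ({t..<3*t} \<inter> A)"
proof -
  have "inj_on (\<lambda>g. g + t) ({t..<3*t} \<inter> A)" by (simp add: inj_on_def)
  then show ?thesis
    unfolding pos_agents_approval by (subst card_Un_disjoint) (auto simp: card_image)
qed

lemma card_common_add_private_le:
  "A \<subseteq> {0..<3*t::nat} \<Longrightarrow> card ({0..<t} \<inter> A) + card ({t..<3*t} \<inter> A) \<le> card A"
proof -
  assume "A \<subseteq> {0..<3*t}"
  then have "finite A" by (rule finite_subset) simp
  have "card ({0..<t} \<inter> A) + card ({t..<3*t} \<inter> A) = card ({0..<t} \<inter> A \<union> {t..<3*t} \<inter> A)"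
    by (rule card_Un_disjoint[symmetric]) (use \<open>finite A\<close> in auto)
  also have "\<dots> \<le> card A" by (rule card_mono[OF \<open>finite A\<close>]) auto
  finally show ?thesis .
qed

lemma approval_no_alloc_pleases_all:
  assumes "1 \<le> t" and "is_alloc {0..<3*t} (2*t) B"
  shows "\<not> 0 < (\<Prod>i\<in>{0..<4*t}. util (approval t) i B)"
proof
  assume "0 < (\<Prod>i\<in>{0..<4*t}. util (approval t) i B)"
  then have "pos_agents {0..<4*t} (approval t) B = {0..<4*t}"
    by (auto simp: prod_util_pos_iff pos_agents_def)
  then have "(if {0..<t} \<inter> B = {} then 0 else 2*t) + card ({t..<3*t} \<inter> B) = 4*t"
    by (metis card_atLeastLessThan card_pos_agents_approval diff_zero)
  moreover have "card ({t..<3*t} \<inter> B) \<le> 2*t"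
    using card_mono[of "{t..<3*t}" "{t..<3*t} \<inter> B"] by auto
  ultimately have "1 \<le> card ({0..<t} \<inter> B)" and "card ({t..<3*t} \<inter> B) = 2*t"
    using assms(1) by (auto split: if_splits simp: Suc_le_eq card_gt_0_iff)
  moreover have "card ({0..<t} \<inter> B) + card ({t..<3*t} \<inter> B) \<le> card B"
    using assms(2) by (intro card_common_add_private_le) (simp add: is_alloc_def)
  ultimately show False
    using assms by (simp add: is_alloc_def)
qed

text \<open>The exchange step: since \<open>\<alpha> = 2t\<close>, two chosen common goods leave some private good unchosen.\<close>
lemma approval_exchange:
  assumes A: "is_alloc {0..<3*t} (2*t) A" and two: "2 \<le> card ({0..<t} \<inter> A)"
  shows "\<exists>B. is_alloc {0..<3*t} (2*t) B \<and>
     card (pos_agents {0..<4*t} (approval t) A) < card (pos_agents {0..<4*t} (approval t) B)"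
proof -
  have sub: "A \<subseteq> {0..<3*t}" and cardA: "card A \<le> 2*t"
    using A by (auto simp: is_alloc_def)
  have "finite A" using sub by (rule finite_subset) simp
  have "card ({t..<3*t} \<inter> A) < card {t..<3*t}"
    using card_common_add_private_le[OF sub] two cardA by simp
  then obtain u where u: "u \<in> {t..<3*t}" "u \<notin> A"
    by (metis Int_absorb2 order_less_irrefl subsetI)
  have "\<not> (\<forall>x\<in>{0..<t} \<inter> A. \<forall>y\<in>{0..<t} \<inter> A. x = y)"
    using two card_le_Suc0_iff_eq[of "{0..<t} \<inter> A"] by auto
  then obtain x y where xy: "x \<in> {0..<t} \<inter> A" "y \<in> {0..<t} \<inter> A" "x \<noteq> y"
    by blast
  define B where "B = insert u (A - {x})"
  have "card B = card A"
    using u xy \<open>finite A\<close> card_gt_0_iff[of A] by (auto simp: B_def card_Diff_singleton)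
  then have "is_alloc {0..<3*t} (2*t) B"
    using sub cardA u by (auto simp: is_alloc_def B_def)
  moreover have "{0..<t} \<inter> B \<noteq> {}"
    using xy by (auto simp: B_def)
  moreover have "{t..<3*t} \<inter> B = insert u ({t..<3*t} \<inter> A)"
    using xy u by (auto simp: B_def)
  ultimately show ?thesis
    using xy u \<open>finite A\<close> by (auto simp: card_pos_agents_approval)
qed

lemma MNW_approval_card_common_le_1:
  assumes "1 \<le> t" and "MNW {0..<4*t} {0..<3*t} (approval t) (2*t) A"
  shows "card ({0..<t} \<inter> A) \<le> 1"
proof (rule ccontr)
  assume "\<not> ?thesis"
  then have "2 \<le> card ({0..<t} \<inter> A)" by simp
  moreover have "is_alloc {0..<3*t} (2*t) A" using assms(2) by (simp add: MNW_def)
  ultimately obtain B where "is_alloc {0..<3*t} (2*t) B"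
    "card (pos_agents {0..<4*t} (approval t) A) < card (pos_agents {0..<4*t} (approval t) B)"
    using approval_exchange by blast
  then show False
    using MNW_maximizes_card_pos_agents[OF assms(2) approval_no_alloc_pleases_all[OF assms(1)]]
    by (meson not_le)
qed

lemma approval_common_group_cohesive:
  assumes "1 \<le> t"
  shows "cohesive {0..<4*t} (approval t) (2*t) t {0..<2*t}"
proof -
  have "(\<Inter>i\<in>{0..<2*t}. approval t i) = {0..<t}"
    using assms by (auto simp: approval_def)
  moreover have "real t * real (card {0..<4*t}) / real (2*t) = real (2*t)"
    using assms by (simp add: field_simps)
  ultimately show ?thesis by (simp add: cohesive_def)
qed

theorem mainTheorem4:
  fixes \<beta> :: real
  assumes "\<beta> \<ge> 0"
  shows "\<exists>N G R \<alpha>. valid_instance N G R \<alpha> \<and> (\<forall>A. MNW N G R \<alpha> A \<longrightarrow> \<not> EJR N R \<alpha> \<beta> A)"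
proof -
  define t where "t = nat \<lceil>\<beta>\<rceil> + 1"
  have "1 \<le> t" and "\<beta> + 1 \<le> t"
    using assms by (simp_all add: t_def of_nat_nat)
  have "\<not> EJR {0..<4*t} (approval t) (2*t) \<beta> A"
    if "MNW {0..<4*t} {0..<3*t} (approval t) (2*t) A" for A
  proof
    assume "EJR {0..<4*t} (approval t) (2*t) \<beta> A"
    then obtain j where "j < 2*t" "t - \<beta> < util (approval t) j A"
      using approval_common_group_cohesive[OF \<open>1 \<le> t\<close>] \<open>1 \<le> t\<close> by (force simp: EJR_def)
    then show False
      using MNW_approval_card_common_le_1[OF \<open>1 \<le> t\<close> that] \<open>\<beta> + 1 \<le> t\<close>
      by (simp add: util_approval_common)
  qed
  then show ?thesis
    using valid_instance_approval[OF \<open>1 \<le> t\<close>] by blast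
qed

end
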